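(* For each state $m$, $$I(m)=\sup_{\mu\in\mathcal M}J^*(m;\mu)=\sup_{\mu\in\bar{\mathcal M}}J^*(m;\mu).$$
   Context: A raw observation $X$ has density $f_m$ under state $m\in\{0,\dots,M-1\}$ (probability $\mathbf P_m$) with respect to a common $\sigma$-finite measure; standing assumption: for all $m\neq m'$, $0<\mathbf E_m[\log(f_m(X)/f_{m'}(X))]<\infty$. Deterministic quantizers are measurable maps $\phi$ to $\{0,\dots,l-1\}$ (set $\Phi$); a randomized quantizer $\bar\phi=\sum_jp^j\phi^j$ is a probability distribution on a countable subset of $\Phi$; $\bar\Phi$ is the set of all quantizers. $f_m(u;\phi)=\mathbf P_m(\phi(X)=u)$, $I(m,m';\phi)=\sum_uf_m(u;\phi)\log\frac{f_m(u;\phi)}{f_{m'}(u;\phi)}$, $I(m,m';\bar\phi)=\sum_jp^jI(m,m';\phi^j)$, $I(m;\bar\phi)=\min_{m'\ne m}I(m,m';\bar\phi)$, $I(m)=\sup_{\bar\phi\in\bar\Phi}I(m;\bar\phi)$. The distribution vector of $\bar\phi$ is $q(\bar\phi)=(q_{i,m})$, $q_{i,m}=\mathbf P_m(\bar\phi(X)=i)$ (for randomized $\bar\phi$, $\sum_jp^j\mathbf P_m(\phi^j(X)=i)$). $Q=\{q(\phi):\phi\in\Phi\}$, $\bar Q=\{q(\bar\phi):\bar\phi\in\bar\Phi\}$. For $q\in\bar Q$, $J(m,m';q)=\sum_{i=0}^{l-1}q_{i,m}\log(q_{i,m}/q_{i,m'})$ with $0\log(0/0)=0$. $\bar{\mathcal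 M}$ is the set of Borel probability measures on $\bar Q$ and $\mathcal M\subset\bar{\mathcal M}$ those supported on $Q$; for $\mu\in\bar{\mathcal M}$, $J^*(m,m';\mu)=\int_{\bar Q}J(m,m';q)\,d\mu(q)$ and $J^*(m;\mu)=\min_{m'\neq m}J^*(m,m';\mu)$. *)

theory Defs
  imports "HOL-Probability.Probability"
begin

text \<open>States are the elements of a finite type 'm (M = CARD('m)), quantizer
  outputs are the elements of a finite type 'l (l = CARD('l)).
  The raw observation lives in the measure space N (the common sigma-finite
  dominating measure); f m is the density of X under state m.\<close>

definition Pm :: "'a measure \<Rightarrow> ('m \<Rightarrow> 'a \<Rightarrow> real) \<Rightarrow> 'm \<Rightarrow> 'a measure" where
  "Pm N f m = density N (\<lambda>x. ennreal (f m x))"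

definition quantizers :: "'a measure \<Rightarrow> ('a \<Rightarrow> 'l::finite) set" where
  "quantizers N = {\<phi>. \<phi> \<in> measurable N (count_space UNIV)}"

text \<open>Randomized quantizers: probability distributions (with countable support)
  on deterministic quantizers.\<close>
definition rquantizers :: "'a measure \<Rightarrow> ('a \<Rightarrow> 'l::finite) pmf set" where
  "rquantizers N = {p. set_pmf p \<subseteq> quantizers N}"

definition fq :: "'a measure \<Rightarrow> ('m \<Rightarrow> 'a \<Rightarrow> real) \<Rightarrow> 'm \<Rightarrow> ('a \<Rightarrow> 'l) \<Rightarrow> 'l \<Rightarrow> real" where
  "fq N f m \<phi> u = measure (Pm N f m) (\<phi> -` {u} \<inter> space N)"

text \<open>I(m,m';phi) for deterministic phi (note 0 * ln(...) = 0).\<close>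
definition Idet :: "'a measure \<Rightarrow> ('m \<Rightarrow> 'a \<Rightarrow> real) \<Rightarrow> 'm \<Rightarrow> 'm \<Rightarrow> ('a \<Rightarrow> 'l::finite) \<Rightarrow> real" where
  "Idet N f m m' \<phi> = (\<Sum>u\<in>UNIV. fq N f m \<phi> u * ln (fq N f m \<phi> u / fq N f m' \<phi> u))"

definition Irand :: "'a measure \<Rightarrow> ('m \<Rightarrow> 'a \<Rightarrow> real) \<Rightarrow> 'm \<Rightarrow> 'm \<Rightarrow> ('a \<Rightarrow> 'l::finite) pmf \<Rightarrow> real" where
  "Irand N f m m' p = measure_pmf.expectation p (\<lambda>\<phi>. Idet N f m m' \<phi>)"

definition Imin :: "'a measure \<Rightarrow> ('m::finite \<Rightarrow> 'a \<Rightarrow> real) \<Rightarrow> 'm \<Rightarrow> ('a \<Rightarrow> 'l::finite) pmf \<Rightarrow> real" where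
  "Imin N f m p = Min ((\<lambda>m'. Irand N f m m' p) ` (UNIV - {m}))"

definition Isup :: "'a measure \<Rightarrow> ('m::finite \<Rightarrow> 'a \<Rightarrow> real) \<Rightarrow> 'l::finite itself \<Rightarrow> 'm \<Rightarrow> real" where
  "Isup N f (L :: 'l itself) m = (SUP p \<in> (rquantizers N :: ('a \<Rightarrow> 'l) pmf set). Imin N f m p)"

definition qvec :: "'a measure \<Rightarrow> ('m::finite \<Rightarrow> 'a \<Rightarrow> real) \<Rightarrow> ('a \<Rightarrow> 'l::finite) pmf \<Rightarrow> real ^ 'm ^ 'l" where
  "qvec N f p = (\<chi> i. \<chi> m. measure_pmf.expectation p (\<lambda>\<phi>. fq N f m \<phi> i))"

definition qdet :: "'a measure \<Rightarrow> ('m::finite \<Rightarrow> 'a \<Rightarrow> real) \<Rightarrow> ('a \<Rightarrow> 'l::finite) \<Rightarrow> real ^ 'm ^ 'l" where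
  "qdet N f \<phi> = (\<chi> i. \<chi> m. fq N f m \<phi> i)"

definition Qset :: "'a measure \<Rightarrow> ('m::finite \<Rightarrow> 'a \<Rightarrow> real) \<Rightarrow> (real ^ 'm ^ 'l::finite) set" where
  "Qset N f = qdet N f ` quantizers N"

definition Qbar :: "'a measure \<Rightarrow> ('m::finite \<Rightarrow> 'a \<Rightarrow> real) \<Rightarrow> (real ^ 'm ^ 'l::finite) set" where
  "Qbar N f = qvec N f ` rquantizers N"

definition J :: "'m::finite \<Rightarrow> 'm \<Rightarrow> real ^ 'm ^ 'l::finite \<Rightarrow> real" where
  "J m m' q = (\<Sum>i\<in>UNIV. q $ i $ m * ln (q $ i $ m / q $ i $ m'))"

definition borel_probs :: "'b::topological_space set \<Rightarrow> 'b measure set" where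
  "borel_probs S = {\<mu>. sets \<mu> = sets (restrict_space borel S) \<and> prob_space \<mu>}"

definition Jstar :: "'m::finite \<Rightarrow> 'm \<Rightarrow> (real ^ 'm ^ 'l::finite) measure \<Rightarrow> real" where
  "Jstar m m' \<mu> = integral\<^sup>L \<mu> (J m m')"

definition Jstar_min :: "'m::finite \<Rightarrow> (real ^ 'm ^ 'l::finite) measure \<Rightarrow> real" where
  "Jstar_min m \<mu> = Min ((\<lambda>m'. Jstar m m' \<mu>) ` (UNIV - {m}))"

end

theory Submission
  imports Defs
begin

(* Everything rests on the log-sum inequality in integral form (log_sum_inequality), obtained
   from the variational description  a ln(a/b) = sup_{s>0} ((ln s + 1) a - s b).  Applied to
   the densities restricted to an event it bounds every term of I(m,m';phi) and shows that the
   quantized distributions stay mutually absolutely continuous; applied to a randomized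
   quantizer it gives Jensen's inequality J(q(p)) <= I(p), i.e. convexity of the divergence.

   For any S with Q <= S <= Qbar the two suprema are compared in both directions:
   - pushing a randomized quantizer forward to its distribution vectors gives a measure on S
     with the same divergence profile (Jstar_min_pushforward);
   - conversely the mean profile of a measure on S lies in the closure of the convex set of
     vectors dominated by profiles of randomized quantizers (convexity comes from mixing
     quantizers, closure membership from a separating hyperplane), so it is approximated by a
     single randomized quantizer (Imin_approximates_Jstar_min).
   Two-sided approximation of suprema (SUP_eq_by_mutual_approximation) then yields the
   theorem for S = Q and S = Qbar. *)

text \<open>Tangent-line (Fenchel) lower bound for the divergence integrand a ln(a/b); with s = a/b it
  is an equality, which gives the variational formula a ln(a/b) = sup_s ((ln s + 1) a - s b).\<close>
lemma xlogx_ge_dual_bound: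
  fixes a b s :: real
  assumes "0 \<le> a" "0 \<le> b" "b = 0 \<longrightarrow> a = 0" "0 < s"
  shows "(ln s + 1) * a - s * b \<le> a * ln (a / b)"
proof (cases "a = 0")
  case True
  then show ?thesis using assms by simp
next
  case False
  then have a: "0 < a" and b: "0 < b" using assms by auto
  have "ln (s * b / a) \<le> s * b / a - 1"
    using a b assms(4) by (intro ln_le_minus_one) auto
  also have "ln (s * b / a) = ln s - ln (a / b)"
    using a b assms(4) by (simp add: ln_div ln_mult)
  finally have "a * (ln s - ln (a / b)) \<le> a * (s * b / a - 1)"
    using a by (intro mult_left_mono) auto
  also have "\<dots> = s * b - a" using a by (simp add: field_simps)
  finally show ?thesis by (simp add: algebra_simps)
qed

lemma xlogx_le_of_dual_bounds:
  fixes A B E :: real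
  assumes A: "0 \<le> A" and B: "0 \<le> B"
    and dual: "\<And>s. 0 < s \<Longrightarrow> (ln s + 1) * A - s * B \<le> E"
  shows "A * ln (A / B) \<le> E \<and> (B = 0 \<longrightarrow> A = 0)"
proof (cases "A = 0")
  case True
  have "0 \<le> E"
  proof (rule ccontr)
    assume "\<not> 0 \<le> E"
    define s where "s = - E / (B + 1)"
    have "0 < s" using \<open>\<not> 0 \<le> E\<close> B by (simp add: s_def divide_neg_pos)
    moreover have "E < - s * B"
      using \<open>\<not> 0 \<le> E\<close> B by (simp add: s_def field_simps)
    ultimately show False using dual[of s] True by simp
  qed
  then show ?thesis using True by simp
next
  case False
  then have "0 < A" using A by simp
  have "0 < B"
  proof (rule ccontr)
    assume "\<not> 0 < B"
    then have "(ln (exp (\<bar>E\<bar> / A)) + 1) * A - exp (\<bar>E\<bar> / A) * B = \<bar>E\<bar> + A"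
      using \<open>0 < A\<close> B by (simp add: field_simps)
    with dual[of "exp (\<bar>E\<bar> / A)"] \<open>0 < A\<close> show False by simp
  qed
  then show ?thesis using dual[of "A / B"] \<open>0 < A\<close> by (simp add: algebra_simps)
qed

text \<open>Each divergence term of two sub-probabilities is at least -1 (take s = 1 above).\<close>
lemma xlogx_ge_minus_one:
  fixes a b :: real
  assumes "0 \<le> a" "a \<le> 1" "0 \<le> b" "b \<le> 1"
  shows "-1 \<le> a * ln (a / b)"
proof (cases "0 < a \<and> b = 0")
  case False
  then have "(ln 1 + 1) * a - 1 * b \<le> a * ln (a / b)"
    using assms by (intro xlogx_ge_dual_bound) auto
  then show ?thesis using assms by simp
qed simp

text \<open>The log-sum inequality in integral form: integrating the dual bound and passing back
  through the variational formula gives (int a) ln(int a / int b) <= int a ln(a/b).\<close>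
lemma log_sum_inequality:
  fixes a b :: "'x \<Rightarrow> real"
  assumes int_a: "integrable M a" and int_b: "integrable M b"
    and int_ab: "integrable M (\<lambda>x. a x * ln (a x / b x))"
    and pos: "AE x in M. 0 \<le> a x \<and> 0 \<le> b x \<and> (b x = 0 \<longrightarrow> a x = 0)"
  shows "(\<integral>x. a x \<partial>M) * ln ((\<integral>x. a x \<partial>M) / (\<integral>x. b x \<partial>M)) \<le> (\<integral>x. a x * ln (a x / b x) \<partial>M)
    \<and> ((\<integral>x. b x \<partial>M) = 0 \<longrightarrow> (\<integral>x. a x \<partial>M) = 0)"
proof (rule xlogx_le_of_dual_bounds)
  show "0 \<le> (\<integral>x. a x \<partial>M)" "0 \<le> (\<integral>x. b x \<partial>M)"
    using pos by (intro integral_nonneg_AE; eventually_elim; simp)+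
  fix s :: real
  assume "0 < s"
  have "(ln s + 1) * (\<integral>x. a x \<partial>M) - s * (\<integral>x. b x \<partial>M)
      = (\<integral>x. (ln s + 1) * a x - s * b x \<partial>M)"
    using int_a int_b by simp
  also have "\<dots> \<le> (\<integral>x. a x * ln (a x / b x) \<partial>M)"
    using int_a int_b int_ab pos
  proof (intro integral_mono_AE)
    show "AE x in M. (ln s + 1) * a x - s * b x \<le> a x * ln (a x / b x)"
      using pos by eventually_elim (use xlogx_ge_dual_bound \<open>0 < s\<close> in blast)
  qed auto
  finally show "(ln s + 1) * (\<integral>x. a x \<partial>M) - s * (\<integral>x. b x \<partial>M) \<le> (\<integral>x. a x * ln (a x / b x) \<partial>M)" .
qed

text \<open>This includes the unbounded case, where both suprema are the default value of Sup.\<close>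
lemma SUP_eq_by_mutual_approximation:
  fixes F :: "'x \<Rightarrow> real" and G :: "'y \<Rightarrow> real"
  assumes "R \<noteq> {}"
    and below: "\<And>p. p \<in> R \<Longrightarrow> \<exists>\<mu>\<in>B. F p \<le> G \<mu>"
    and approx: "\<And>\<mu> \<epsilon>. \<mu> \<in> B \<Longrightarrow> 0 < \<epsilon> \<Longrightarrow> \<exists>p\<in>R. G \<mu> - \<epsilon> \<le> F p"
  shows "(SUP p\<in>R. F p) = (SUP \<mu>\<in>B. G \<mu>)"
proof -
  have "B \<noteq> {}" using \<open>R \<noteq> {}\<close> below by blast
  have bdd_iff: "bdd_above (F ` R) \<longleftrightarrow> bdd_above (G ` B)"
  proof
    assume "bdd_above (F ` R)"
    then obtain c where "\<And>p. p \<in> R \<Longrightarrow> F p \<le> c" by (auto simp: bdd_above_def)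
    then have "G \<mu> \<le> c + 1" if "\<mu> \<in> B" for \<mu>
      using approx[OF that, of 1] by force
    then show "bdd_above (G ` B)" by (auto simp: bdd_above_def)
  next
    assume "bdd_above (G ` B)"
    then obtain c where "\<And>\<mu>. \<mu> \<in> B \<Longrightarrow> G \<mu> \<le> c" by (auto simp: bdd_above_def)
    then have "F p \<le> c" if "p \<in> R" for p
      using below[OF that] by force
    then show "bdd_above (F ` R)" by (auto simp: bdd_above_def)
  qed
  show ?thesis
  proof (cases "bdd_above (F ` R)")
    case True
    then have "bdd_above (G ` B)" using bdd_iff by simp
    show ?thesis
    proof (rule antisym)
      show "(SUP p\<in>R. F p) \<le> (SUP \<mu>\<in>B. G \<mu>)"
        using below \<open>bdd_above (G ` B)\<close> by (intro cSUP_least[OF \<open>R \<noteq> {}\<close>]) (meson cSUP_upper2)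
      show "(SUP \<mu>\<in>B. G \<mu>) \<le> (SUP p\<in>R. F p)"
      proof (rule cSUP_least[OF \<open>B \<noteq> {}\<close>], rule field_le_epsilon)
        fix \<mu> and \<epsilon> :: real
        assume "\<mu> \<in> B" "0 < \<epsilon>"
        then obtain p where "p \<in> R" "G \<mu> - \<epsilon> \<le> F p" using approx by blast
        moreover have "F p \<le> (SUP p\<in>R. F p)" using True \<open>p \<in> R\<close> by (rule cSUP_upper2) simp
        ultimately show "G \<mu> \<le> (SUP p\<in>R. F p) + \<epsilon>" by simp
      qed
    qed
  next
    case False
    then have "\<not> bdd_above (G ` B)" using bdd_iff by simp
    with False have "(\<lambda>z. \<forall>x\<in>F ` R. x \<le> z) = (\<lambda>z. \<forall>x\<in>G ` B. x \<le> z)"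
      unfolding bdd_above_def by (intro ext) blast
    then show ?thesis by (simp only: Sup_real_def)
  qed
qed

text \<open>The mean of a vector-valued random variable with values in a convex set K lies in the
  closure of K; otherwise a separating hyperplane would separate the mean from all values.\<close>
lemma mean_in_closure_of_convex:
  fixes g :: "'x \<Rightarrow> real ^ 'n"
  assumes "prob_space M" and "convex K"
    and int: "\<And>i. integrable M (\<lambda>x. g x $ i)"
    and range: "\<And>x. x \<in> space M \<Longrightarrow> g x \<in> K"
  shows "(\<chi> i. \<integral>x. g x $ i \<partial>M) \<in> closure K"
proof (rule ccontr)
  interpret prob_space M by fact
  let ?m = "\<chi> i. \<integral>x. g x $ i \<partial>M"
  assume "?m \<notin> closure K"
  then obtain a b where sep: "inner a ?m < b" "\<forall>y\<in>closure K. b < inner a y"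
    using separating_hyperplane_closed_point[OF convex_closure[OF \<open>convex K\<close>] closed_closure]
    by blast
  have "inner a ?m = (\<integral>x. inner a (g x) \<partial>M)"
    using int by (simp add: inner_vec_def Bochner_Integration.integral_sum)
  also have "b \<le> (\<integral>x. inner a (g x) \<partial>M)"
  proof (rule integral_ge_const)
    show "integrable M (\<lambda>x. inner a (g x))" using int by (simp add: inner_vec_def)
    show "AE x in M. b \<le> inner a (g x)"
      using range sep(2) closure_subset by (intro AE_I2) (fastforce intro: less_imp_le)
  qed
  ultimately show False using sep(1) by simp
qed

definition mix_pmf :: "real \<Rightarrow> 'b pmf \<Rightarrow> 'b pmf \<Rightarrow> 'b pmf" where
  "mix_pmf u p1 p2 = bind_pmf (bernoulli_pmf u) (\<lambda>b. if b then p1 else p2)"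

lemma set_mix_pmf: "set_pmf (mix_pmf u p1 p2) \<subseteq> set_pmf p1 \<union> set_pmf p2"
  unfolding mix_pmf_def by (auto split: if_splits)

lemma integral_mix_pmf:
  fixes g :: "'b \<Rightarrow> real"
  assumes "0 \<le> u" "u \<le> 1" and bounded: "\<And>x. \<bar>g x\<bar> \<le> B"
  shows "(\<integral>x. g x \<partial>mix_pmf u p1 p2) = u * (\<integral>x. g x \<partial>p1) + (1 - u) * (\<integral>x. g x \<partial>p2)"
proof -
  have bind_eq: "measure_pmf (mix_pmf u p1 p2)
      = measure_pmf (bernoulli_pmf u) \<bind> (\<lambda>b. measure_pmf (if b then p1 else p2))"
    unfolding mix_pmf_def by (rule measure_pmf_bind)
  have "(\<integral>x. g x \<partial>mix_pmf u p1 p2)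
      = (\<integral>b. (\<integral>x. g x \<partial>(if b then p1 else p2)) \<partial>bernoulli_pmf u)"
    unfolding bind_eq
    by (rule integral_bind[where K="count_space UNIV" and B=B and B'=1])
       (use bounded in \<open>auto simp: space_subprob_algebra measure_pmf.subprob_space_axioms
          prob_space.emeasure_space_1[OF prob_space_measure_pmf]
          intro: measure_pmf.finite_measure_axioms\<close>)
  then show ?thesis using assms(1,2) by simp
qed

lemma mix_pmf_in_rquantizers:
  "p1 \<in> rquantizers N \<Longrightarrow> p2 \<in> rquantizers N \<Longrightarrow> mix_pmf u p1 p2 \<in> rquantizers N"
  unfolding rquantizers_def using set_mix_pmf[of u p1 p2] by auto

lemma J_measurable [measurable]:
  "J k k' \<in> borel_measurable (borel :: (real ^ 'm::finite ^ 'l::finite) measure)"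
proof -
  have [measurable]: "(\<lambda>q::real ^ 'm ^ 'l. q $ i $ j) \<in> borel_measurable borel" for i j
    by (intro borel_measurable_continuous_onI continuous_intros)
  show ?thesis unfolding J_def by measurable
qed

lemma J_qdet: "J k k' (qdet N f \<phi>) = Idet N f k k' \<phi>"
  unfolding J_def qdet_def Idet_def by simp

text \<open>Q is contained in Qbar: a deterministic quantizer is the point mass on itself.\<close>
lemma qdet_in_Qbar: "\<phi> \<in> quantizers N \<Longrightarrow> qdet N f \<phi> \<in> Qbar N f"
  unfolding Qbar_def rquantizers_def
  by (rule image_eqI[where x="return_pmf \<phi>"]) (auto simp: qvec_def qdet_def)

lemma rquantizers_nonempty: "(rquantizers N :: ('a \<Rightarrow> 'l::finite) pmf set) \<noteq> {}"
proof -
  have "return_pmf (\<lambda>_. undefined) \<in> (rquantizers N :: ('a \<Rightarrow> 'l) pmf set)"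
    unfolding rquantizers_def quantizers_def by simp
  then show ?thesis by blast
qed

lemma Jstar_min_pushforward:
  assumes p: "p \<in> (rquantizers N :: ('a \<Rightarrow> 'l::finite) pmf set)"
    and S: "qdet N f ` quantizers N \<subseteq> (S :: (real ^ 'm::finite ^ 'l) set)"
  shows "\<exists>\<mu>\<in>borel_probs S. Jstar_min k \<mu> = Imin N f k p"
proof -
  obtain \<phi>0 where "\<phi>0 \<in> set_pmf p" using set_pmf_not_empty[of p] by blast
  then have \<phi>0: "\<phi>0 \<in> quantizers N" using p unfolding rquantizers_def by auto
  text \<open>Outside the support of p the map is irrelevant; it only has to land in S.\<close>
  define g where "g = (\<lambda>\<phi>. if \<phi> \<in> quantizers N then qdet N f \<phi> else qdet N f \<phi>0)"
  have g_meas: "g \<in> measurable (measure_pmf p) (restrict_space borel S)"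
    using S \<phi>0 by (auto simp: g_def space_restrict_space)
  define \<mu> where "\<mu> = distr (measure_pmf p) (restrict_space borel S) g"
  have "\<mu> \<in> borel_probs S"
    unfolding borel_probs_def \<mu>_def
    using g_meas by (auto intro: prob_space.prob_space_distr prob_space_measure_pmf)
  moreover have "Jstar k k' \<mu> = Irand N f k k' p" for k'
  proof -
    have "Jstar k k' \<mu> = (\<integral>\<phi>. J k k' (g \<phi>) \<partial>p)"
      unfolding Jstar_def \<mu>_def
      by (rule integral_distr[OF g_meas]) (intro measurable_restrict_space1 J_measurable)
    also have "\<dots> = Irand N f k k' p"
      unfolding Irand_def using p unfolding rquantizers_def
      by (intro integral_cong_AE) (auto intro!: AE_pmfI simp: g_def J_qdet)
    finally show ?thesis .
  qed
  then have "Jstar_min k \<mu> = Imin N f k p"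
    unfolding Jstar_min_def Imin_def by simp
  ultimately show ?thesis by blast
qed

lemma competitors_nonempty:
  assumes "CARD('m::finite) \<ge> 2"
  shows "(UNIV :: 'm set) - {k} \<noteq> {}"
proof
  assume "UNIV - {k} = {}"
  then have "CARD('m) = card {k}"
    by (metis Diff_eq_empty_iff subset_singletonD UNIV_not_empty)
  then show False using assms by simp
qed

locale quantizer_model =
  fixes N :: "'a measure" and f :: "'m::finite \<Rightarrow> 'a \<Rightarrow> real"
  assumes density_measurable [measurable]: "\<And>k. f k \<in> borel_measurable N"
    and density_nonneg: "\<And>k x. x \<in> space N \<Longrightarrow> 0 \<le> f k x"
    and prob_Pm: "\<And>k. prob_space (Pm N f k)"
    and support_Pm: "\<And>k k'. k \<noteq> k' \<Longrightarrow> AE x in Pm N f k. 0 < f k' x"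
    and llr_integrable: "\<And>k k'. k \<noteq> k' \<Longrightarrow> integrable (Pm N f k) (\<lambda>x. ln (f k x / f k' x))"
begin

lemma sets_Pm [simp]: "sets (Pm N f k) = sets N"
  by (simp add: Pm_def)

lemma AE_density_nonneg: "AE x in N. 0 \<le> f k x"
  using density_nonneg by (intro AE_I2) auto

lemma measure_Pm_eq_integral:
  assumes "A \<in> sets N"
  shows "measure (Pm N f k) A = (\<integral>x. f k x * indicator A x \<partial>N)"
proof -
  have "measure (Pm N f k) A = (\<integral>x. indicator A x \<partial>Pm N f k)"
    using assms by simp
  also have "\<dots> = (\<integral>x. f k x * indicator A x \<partial>N)"
    unfolding Pm_def using assms AE_density_nonneg by (subst integral_density) auto
  finally show ?thesis .
qed

lemma integrable_density_indicator:
  assumes "A \<in> sets N"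
  shows "integrable N (\<lambda>x. f k x * indicator A x)"
proof -
  interpret prob_space "Pm N f k" by (rule prob_Pm)
  have "integrable (Pm N f k) (indicator A :: _ \<Rightarrow> real)"
    using assms by (intro integrable_real_indicator) (auto simp: less_top[symmetric])
  then show ?thesis
    unfolding Pm_def using assms AE_density_nonneg by (subst (asm) integrable_density) auto
qed

definition kl_density :: "'m \<Rightarrow> 'm \<Rightarrow> 'a \<Rightarrow> real" where
  "kl_density k k' x = f k x * ln (f k x / f k' x)"

lemma integrable_kl_density: "k \<noteq> k' \<Longrightarrow> integrable N (kl_density k k')"
  using llr_integrable[of k k'] AE_density_nonneg unfolding Pm_def kl_density_def
  by (subst (asm) integrable_density) auto

lemma event_log_sum:
  assumes "k \<noteq> k'" and A: "A \<in> sets N"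
  shows "measure (Pm N f k) A * ln (measure (Pm N f k) A / measure (Pm N f k') A)
           \<le> (\<integral>x. \<bar>kl_density k k' x\<bar> \<partial>N)
         \<and> (measure (Pm N f k') A = 0 \<longrightarrow> measure (Pm N f k) A = 0)"
proof -
  let ?a = "\<lambda>x. f k x * indicator A x" and ?b = "\<lambda>x. f k' x * indicator A x"
  have ab_eq: "?a x * ln (?a x / ?b x) = indicator A x * kl_density k k' x" for x
    by (simp add: indicator_def kl_density_def)
  have "AE x in N. 0 < f k x \<longrightarrow> 0 < f k' x"
    using support_Pm[OF \<open>k \<noteq> k'\<close>] unfolding Pm_def by (subst (asm) AE_density) auto
  then have pos: "AE x in N. 0 \<le> ?a x \<and> 0 \<le> ?b x \<and> (?b x = 0 \<longrightarrow> ?a x = 0)"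
    using AE_density_nonneg[of k] AE_density_nonneg[of k']
    by eventually_elim (auto simp: indicator_def)
  have int_ab: "integrable N (\<lambda>x. indicator A x * kl_density k k' x)"
    using integrable_mult_indicator[OF A integrable_kl_density[OF \<open>k \<noteq> k'\<close>]] by simp
  have "(\<integral>x. indicator A x * kl_density k k' x \<partial>N) \<le> (\<integral>x. \<bar>kl_density k k' x\<bar> \<partial>N)"
    using int_ab integrable_kl_density[OF \<open>k \<noteq> k'\<close>]
    by (intro integral_mono) (auto simp: indicator_def)
  moreover have "measure (Pm N f k) A * ln (measure (Pm N f k) A / measure (Pm N f k') A)
           \<le> (\<integral>x. indicator A x * kl_density k k' x \<partial>N)
         \<and> (measure (Pm N f k') A = 0 \<longrightarrow> measure (Pm N f k) A = 0)"
    using log_sum_inequality[of N ?a ?b] integrable_density_indicator[OF A] int_ab pos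
    unfolding ab_eq measure_Pm_eq_integral[OF A] by blast
  ultimately show ?thesis by linarith
qed

definition kl_bound :: real where
  "kl_bound = (\<Sum>k\<in>UNIV. \<Sum>k'\<in>UNIV. \<integral>x. \<bar>kl_density k k' x\<bar> \<partial>N)"

lemma kl_bound_nonneg: "0 \<le> kl_bound"
  unfolding kl_bound_def by (intro sum_nonneg integral_nonneg) auto

lemma abs_kl_integral_le_kl_bound: "(\<integral>x. \<bar>kl_density k k' x\<bar> \<partial>N) \<le> kl_bound"
proof -
  have "(\<integral>x. \<bar>kl_density k k' x\<bar> \<partial>N) \<le> (\<Sum>k'\<in>UNIV. \<integral>x. \<bar>kl_density k k' x\<bar> \<partial>N)"
    by (rule member_le_sum) auto
  also have "\<dots> \<le> kl_bound"
    unfolding kl_bound_def by (rule member_le_sum) (auto intro: sum_nonneg)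
  finally show ?thesis .
qed

lemma fq_le_1: "fq N f k \<phi> i \<le> 1"
proof -
  interpret prob_space "Pm N f k" by (rule prob_Pm)
  show ?thesis unfolding fq_def by (rule prob_le_1)
qed

lemma quantized_term_bounds:
  assumes "\<phi> \<in> quantizers N"
  shows "(fq N f k' \<phi> i = 0 \<longrightarrow> fq N f k \<phi> i = 0)
    \<and> \<bar>fq N f k \<phi> i * ln (fq N f k \<phi> i / fq N f k' \<phi> i)\<bar> \<le> kl_bound + 1"
proof (cases "k = k'")
  case True
  have "fq N f k \<phi> i * ln (fq N f k \<phi> i / fq N f k \<phi> i) = 0"
    by (cases "fq N f k \<phi> i = 0") auto
  then show ?thesis using True kl_bound_nonneg by simp
next
  case False
  let ?a = "fq N f k \<phi> i" and ?b = "fq N f k' \<phi> i"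
  have "\<phi> -` {i} \<inter> space N \<in> sets N"
    using assms unfolding quantizers_def by (auto intro: measurable_sets)
  from event_log_sum[OF False this]
  have "?a * ln (?a / ?b) \<le> kl_bound \<and> (?b = 0 \<longrightarrow> ?a = 0)"
    using abs_kl_integral_le_kl_bound[of k k'] unfolding fq_def by linarith
  moreover have "-1 \<le> ?a * ln (?a / ?b)"
    using fq_le_1 by (intro xlogx_ge_minus_one) (auto simp: fq_def)
  ultimately show ?thesis using kl_bound_nonneg by (auto simp: abs_le_iff)
qed

lemma Idet_abs_le:
  assumes "\<phi> \<in> quantizers N"
  shows "\<bar>Idet N f k k' (\<phi> :: 'a \<Rightarrow> 'l::finite)\<bar> \<le> real CARD('l) * (kl_bound + 1)"
proof -
  have "\<bar>Idet N f k k' \<phi>\<bar> \<le> (\<Sum>u\<in>UNIV. \<bar>fq N f k \<phi> u * ln (fq N f k \<phi> u / fq N f k' \<phi> u)\<bar>)"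
    unfolding Idet_def by (rule sum_abs)
  also have "\<dots> \<le> (\<Sum>u\<in>(UNIV :: 'l set). kl_bound + 1)"
    using quantized_term_bounds[OF assms] by (intro sum_mono) blast
  finally show ?thesis by simp
qed

lemma integrable_bounded_on_rquantizer:
  fixes g :: "('a \<Rightarrow> 'l::finite) \<Rightarrow> real"
  assumes "p \<in> rquantizers N" and "\<And>\<phi>. \<phi> \<in> quantizers N \<Longrightarrow> \<bar>g \<phi>\<bar> \<le> B"
  shows "integrable (measure_pmf p) g"
  using assms unfolding rquantizers_def
  by (intro measure_pmf.integrable_const_bound[where B=B] AE_pmfI) auto

text \<open>Convexity of the divergence (the joint convexity of a*ln(a/b), via the log-sum
  inequality): randomizing before computing J can only increase the divergence.\<close>
lemma J_qvec_le_Irand: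
  assumes p: "p \<in> rquantizers N"
  shows "J k k' (qvec N f p :: real ^ 'm ^ 'l::finite) \<le> Irand N f k k' p"
proof -
  let ?G = "\<lambda>i \<phi>. fq N f k \<phi> i * ln (fq N f k \<phi> i / fq N f k' \<phi> i)"
  have in_q: "\<phi> \<in> quantizers N" if "\<phi> \<in> set_pmf p" for \<phi>
    using p that unfolding rquantizers_def by auto
  have int_G: "integrable (measure_pmf p) (?G i)" for i
    using quantized_term_bounds by (intro integrable_bounded_on_rquantizer[OF p]) blast
  have int_fq: "integrable (measure_pmf p) (\<lambda>\<phi>. fq N f j \<phi> i)" for j i
    using fq_le_1 by (intro integrable_bounded_on_rquantizer[OF p]) (auto simp: fq_def)
  have pos: "AE \<phi> in p. 0 \<le> fq N f k \<phi> i \<and> 0 \<le> fq N f k' \<phi> i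
              \<and> (fq N f k' \<phi> i = 0 \<longrightarrow> fq N f k \<phi> i = 0)" for i
  proof (rule AE_pmfI)
    fix \<phi> assume "\<phi> \<in> set_pmf p"
    with quantized_term_bounds[OF in_q, of \<phi> k' i k]
    show "0 \<le> fq N f k \<phi> i \<and> 0 \<le> fq N f k' \<phi> i \<and> (fq N f k' \<phi> i = 0 \<longrightarrow> fq N f k \<phi> i = 0)"
      by (simp add: fq_def)
  qed
  have "J k k' (qvec N f p :: real ^ 'm ^ 'l) \<le> (\<Sum>i\<in>(UNIV :: 'l set). \<integral>\<phi>. ?G i \<phi> \<partial>p)"
    unfolding J_def qvec_def using log_sum_inequality[OF int_fq int_fq int_G pos]
    by (simp add: sum_mono)
  also have "\<dots> = Irand N f k k' p"
    unfolding Irand_def Idet_def by (rule Bochner_Integration.integral_sum[symmetric]) (rule int_G)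
  finally show ?thesis .
qed

lemma Irand_le:
  assumes p: "p \<in> rquantizers N"
  shows "Irand N f k k' (p :: ('a \<Rightarrow> 'l::finite) pmf) \<le> real CARD('l) * (kl_bound + 1)"
  unfolding Irand_def
proof (rule measure_pmf.integral_le_const)
  show "integrable (measure_pmf p) (Idet N f k k')"
    using Idet_abs_le by (rule integrable_bounded_on_rquantizer[OF p])
  show "AE \<phi> in measure_pmf p. Idet N f k k' \<phi> \<le> real CARD('l) * (kl_bound + 1)"
    using p Idet_abs_le unfolding rquantizers_def by (intro AE_pmfI) (auto simp: abs_le_iff)
qed

lemma qvec_bounds: "0 \<le> qvec N f p $ i $ k \<and> qvec N f p $ i $ k \<le> 1"
proof -
  have "integrable (measure_pmf p) (\<lambda>\<phi>. fq N f k \<phi> i)"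
    using fq_le_1 by (intro measure_pmf.integrable_const_bound[where B=1] AE_I2) (auto simp: fq_def)
  then show ?thesis
    unfolding qvec_def using fq_le_1
    by (auto simp: fq_def intro!: integral_nonneg measure_pmf.integral_le_const AE_I2)
qed

text \<open>J is bounded on the set of achievable distribution vectors, so every Borel
  probability measure on a subset of it integrates J.\<close>
lemma J_abs_le:
  assumes "q \<in> (Qbar N f :: (real ^ 'm ^ 'l::finite) set)"
  shows "\<bar>J k k' q\<bar> \<le> real CARD('l) * (kl_bound + 1)"
proof -
  obtain p where p: "p \<in> rquantizers N" and q: "q = qvec N f p"
    using assms unfolding Qbar_def by auto
  have "J k k' q \<le> real CARD('l) * (kl_bound + 1)"
    using J_qvec_le_Irand[OF p] Irand_le[OF p] q by (metis order_trans)
  moreover have "(\<Sum>i\<in>(UNIV :: 'l set). -1) \<le> J k k' q"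
    unfolding J_def q using qvec_bounds by (intro sum_mono xlogx_ge_minus_one) auto
  then have "- real CARD('l) \<le> J k k' q" by simp
  moreover have "real CARD('l) \<le> real CARD('l) * (kl_bound + 1)"
    using kl_bound_nonneg by simp
  ultimately show ?thesis unfolding abs_le_iff by linarith
qed

lemma Irand_mix:
  assumes "0 \<le> u" "u \<le> 1" and p: "p1 \<in> rquantizers N" "p2 \<in> rquantizers N"
  shows "Irand N f k k' (mix_pmf u p1 p2 :: ('a \<Rightarrow> 'l::finite) pmf)
           = u * Irand N f k k' p1 + (1 - u) * Irand N f k k' p2"
proof -
  define T where "T = (\<lambda>\<phi>::'a \<Rightarrow> 'l. if \<phi> \<in> quantizers N then Idet N f k k' \<phi> else 0)"
  have Irand_eq: "Irand N f k k' p = (\<integral>\<phi>. T \<phi> \<partial>p)" if "p \<in> rquantizers N" for p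
    using that unfolding Irand_def T_def rquantizers_def
    by (intro integral_cong_AE) (auto intro!: AE_pmfI)
  have "\<bar>T \<phi>\<bar> \<le> real CARD('l) * (kl_bound + 1)" for \<phi>
    unfolding T_def using Idet_abs_le kl_bound_nonneg by auto
  then have "(\<integral>\<phi>. T \<phi> \<partial>mix_pmf u p1 p2) = u * (\<integral>\<phi>. T \<phi> \<partial>p1) + (1 - u) * (\<integral>\<phi>. T \<phi> \<partial>p2)"
    by (rule integral_mix_pmf[OF assms(1,2)])
  then show ?thesis
    using Irand_eq[OF mix_pmf_in_rquantizers[OF p]] Irand_eq[OF p(1)] Irand_eq[OF p(2)] by simp
qed

text \<open>The vectors dominated componentwise by some achievable profile (I(k,k';p))_k'
  form a convex set, because mixing quantizers mixes the profiles.\<close>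
lemma dominated_profiles_convex:
  "convex {y :: real ^ 'm. \<exists>p \<in> (rquantizers N :: ('a \<Rightarrow> 'l::finite) pmf set).
             \<forall>k'. y $ k' \<le> Irand N f k k' p}" (is "convex ?D")
  unfolding convex_def
proof (intro ballI allI impI, elim CollectE bexE)
  fix y z :: "real ^ 'm" and u v :: real and p1 p2 :: "('a \<Rightarrow> 'l) pmf"
  assume "0 \<le> u" "0 \<le> v" "u + v = 1"
    and p1: "p1 \<in> rquantizers N" "\<forall>k'. y $ k' \<le> Irand N f k k' p1"
    and p2: "p2 \<in> rquantizers N" "\<forall>k'. z $ k' \<le> Irand N f k k' p2"
  have dominated: "(u *\<^sub>R y + v *\<^sub>R z) $ k' \<le> Irand N f k k' (mix_pmf u p1 p2)" for k'
  proof -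
    have "v = 1 - u" using \<open>u + v = 1\<close> by simp
    have "u * y $ k' + v * z $ k' \<le> u * Irand N f k k' p1 + v * Irand N f k k' p2"
      using p1(2) p2(2) \<open>0 \<le> u\<close> \<open>0 \<le> v\<close> by (intro add_mono mult_left_mono) auto
    then show ?thesis
      using Irand_mix[OF \<open>0 \<le> u\<close> _ p1(1) p2(1), of k k'] \<open>0 \<le> v\<close> \<open>v = 1 - u\<close> by simp
  qed
  show "u *\<^sub>R y + v *\<^sub>R z \<in> ?D"
    using mix_pmf_in_rquantizers[OF p1(1) p2(1), of u] dominated by blast
qed

text \<open>Conversely, the mean divergence profile of a measure on achievable distribution
  vectors lies in the closure of the convex set of profiles dominated by randomized
  quantizers, since by Jensen every single vector's profile J(q) lies in that set.\<close>
lemma Jstar_profile_in_closure: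
  assumes S: "S \<subseteq> (Qbar N f :: (real ^ 'm ^ 'l::finite) set)" and \<mu>: "\<mu> \<in> borel_probs S"
  shows "(\<chi> k'. Jstar k k' \<mu>) \<in> closure {y :: real ^ 'm.
           \<exists>p \<in> (rquantizers N :: ('a \<Rightarrow> 'l) pmf set). \<forall>k'. y $ k' \<le> Irand N f k k' p}"
    (is "_ \<in> closure ?D")
proof -
  interpret prob_space \<mu> using \<mu> unfolding borel_probs_def by auto
  have sets_\<mu>: "sets \<mu> = sets (restrict_space borel S)"
    using \<mu> unfolding borel_probs_def by auto
  then have space_\<mu>: "space \<mu> = S"
    using sets_eq_imp_space_eq[OF sets_\<mu>] by (simp add: space_restrict_space)
  have "J k k' \<in> borel_measurable \<mu>" for k'
    using measurable_restrict_space1[OF J_measurable] measurable_cong_sets[OF sets_\<mu> refl] by blast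
  then have J_int: "integrable \<mu> (J k k')" for k'
    using S space_\<mu>
    by (intro integrable_const_bound[where B="real CARD('l) * (kl_bound + 1)"] AE_I2)
       (auto intro!: J_abs_le)
  have "(\<chi> k'. \<integral>q. (\<chi> k''. J k k'' q) $ k' \<partial>\<mu>) \<in> closure ?D"
  proof (rule mean_in_closure_of_convex[OF prob_space_axioms dominated_profiles_convex])
    fix q assume "q \<in> space \<mu>"
    then obtain p where "p \<in> rquantizers N" "q = qvec N f p"
      using S space_\<mu> unfolding Qbar_def by auto
    then show "(\<chi> k'. J k k' q) \<in> ?D" using J_qvec_le_Irand by auto
  qed (simp add: J_int)
  then show ?thesis by (simp add: Jstar_def)
qed

text \<open>Hence every measure on a set S of achievable distribution vectors is matched up to
  epsilon by a single randomized quantizer: take one whose profile dominates a vector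
  epsilon-close to the mean profile.\<close>
lemma Imin_approximates_Jstar_min:
  assumes card: "CARD('m) \<ge> 2" and S: "S \<subseteq> (Qbar N f :: (real ^ 'm ^ 'l::finite) set)"
    and \<mu>: "\<mu> \<in> borel_probs S" and "0 < \<epsilon>"
  shows "\<exists>p \<in> (rquantizers N :: ('a \<Rightarrow> 'l) pmf set). Jstar_min k \<mu> - \<epsilon> \<le> Imin N f k p"
proof -
  let ?x = "\<chi> k'. Jstar k k' \<mu>"
  obtain y where y: "dist y ?x < \<epsilon>"
    and "\<exists>p \<in> (rquantizers N :: ('a \<Rightarrow> 'l) pmf set). \<forall>k'. y $ k' \<le> Irand N f k k' p"
    using Jstar_profile_in_closure[OF S \<mu>, of k] \<open>0 < \<epsilon>\<close> unfolding closure_approachable by blast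
  then obtain p where p: "p \<in> (rquantizers N :: ('a \<Rightarrow> 'l) pmf set)"
    "\<And>k'. y $ k' \<le> Irand N f k k' p" by blast
  have close: "dist (y $ k') (Jstar k k' \<mu>) < \<epsilon>" for k'
    using dist_vec_nth_le[of y k' ?x] y by simp
  have "Jstar_min k \<mu> - \<epsilon> \<le> Irand N f k k' p" if "k' \<in> UNIV - {k}" for k'
  proof -
    have "Jstar_min k \<mu> \<le> Jstar k k' \<mu>"
      unfolding Jstar_min_def using that by (intro Min_le) auto
    then show ?thesis using p(2)[of k'] close[of k'] by (simp add: dist_real_def)
  qed
  then have "Jstar_min k \<mu> - \<epsilon> \<le> Imin N f k p"
    unfolding Imin_def using competitors_nonempty[OF card] by (subst Min_ge_iff) auto
  then show ?thesis using p(1) by blast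
qed

lemma Isup_eq_SUP_Jstar_min:
  assumes "CARD('m) \<ge> 2"
    and "qdet N f ` quantizers N \<subseteq> S" and "S \<subseteq> (Qbar N f :: (real ^ 'm ^ 'l::finite) set)"
  shows "Isup N f TYPE('l) k = (SUP \<mu> \<in> borel_probs S. Jstar_min k \<mu>)"
  unfolding Isup_def
proof (rule SUP_eq_by_mutual_approximation[OF rquantizers_nonempty])
  show "\<exists>\<mu>\<in>borel_probs S. Imin N f k p \<le> Jstar_min k \<mu>" if "p \<in> rquantizers N" for p :: "('a \<Rightarrow> 'l) pmf"
    using Jstar_min_pushforward[OF that assms(2)] by (metis order_refl)
  show "\<exists>p\<in>(rquantizers N :: ('a \<Rightarrow> 'l) pmf set). Jstar_min k \<mu> - \<epsilon> \<le> Imin N f k p"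
    if "\<mu> \<in> borel_probs S" "0 < \<epsilon>" for \<mu> \<epsilon>
    by (rule Imin_approximates_Jstar_min[OF assms(1,3) that])
qed

end

theorem lemmaA2:
  fixes N :: "'a measure"
    and f :: "'m::finite \<Rightarrow> 'a \<Rightarrow> real"
    and m :: 'm
  assumes "CARD('m) \<ge> 2"
    and "sigma_finite_measure N"
    and "\<And>k. f k \<in> borel_measurable N"
    and "\<And>k x. x \<in> space N \<Longrightarrow> 0 \<le> f k x"
    and "\<And>k. prob_space (Pm N f k)"
    and "\<And>k k'. k \<noteq> k' \<Longrightarrow> AE x in Pm N f k. 0 < f k' x"
    and "\<And>k k'. k \<noteq> k' \<Longrightarrow> integrable (Pm N f k) (\<lambda>x. ln (f k x / f k' x))"
    and "\<And>k k'. k \<noteq> k' \<Longrightarrow> 0 < (\<integral>x. ln (f k x / f k' x) \<partial>Pm N f k)"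
  shows "Isup N f TYPE('l::finite) m
           = (SUP \<mu> \<in> borel_probs (Qset N f :: (real ^ 'm ^ 'l) set). Jstar_min m \<mu>)
       \<and> Isup N f TYPE('l) m
           = (SUP \<mu> \<in> borel_probs (Qbar N f :: (real ^ 'm ^ 'l) set). Jstar_min m \<mu>)"
proof -
  interpret quantizer_model N f
    using assms(3-7) by (rule quantizer_model.intro)
  have "(Qset N f :: (real ^ 'm ^ 'l) set) \<subseteq> Qbar N f"
    unfolding Qset_def using qdet_in_Qbar by blast
  then show ?thesis
    by (intro conjI Isup_eq_SUP_Jstar_min[OF assms(1)]) (auto simp: Qset_def)
qed

end
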